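(* Let $B$ be a Banach left $A$-module having a bounded left approximate identity $(e_\alpha)_\alpha\subseteq A$, and let $b'\in wap_\ell(B)$. Then $\pi_\ell^*(b',e_\alpha)\to b'$ in the weak topology $\sigma(B^*,B^{**})$.
   Context: $A$ is a Banach algebra and $B$ a Banach left $A$-module with action $\pi_\ell(a,b)=ab$. A bounded left approximate identity for $B$ is a bounded net $(e_\alpha)\subseteq A$ with $e_\alpha a\to a$ for all $a\in A$ and $e_\alpha b\to b$ (in norm) for all $b\in B$. For a bounded bilinear $m:X\times Y\to Z$: $m^*:Z^*\times X\to Y^*$, $\langle m^*(z',x),y\rangle=\langle z',m(x,y)\rangle$; $m^{**}:Y^{**}\times Z^*\to X^*$, $\langle m^{**}(y'',z'),x\rangle=\langle y'',m^*(z',x)\rangle$; $m^{***}:X^{**}\times Y^{**}\to Z^{**}$, $\langle m^{***}(x'',y''),z'\rangle=\langle x'',m^{**}(y'',z')\rangle$; $m^t(y,x)=m(x,y)$, $m^{t***t}(x'',y'')=(m^t)^{***}(y'',x'')$. $wap_\ell(B)=\{b'\in B^*:\langle\pi_\ell^{***}(a'',b''),b'\rangle=\langle\pi_\ell^{t***t}(a'',b''),b'\rangle$ for all $a''\in A^{**},b''\in B^{**}\}$. *)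

theory Defs
  imports "HOL-Analysis.Analysis"
begin

(* Dual spaces are the real Banach duals: X^* = X =>L real. *)

definition adj1 :: "('x::real_normed_vector \<Rightarrow> 'y::real_normed_vector \<Rightarrow> 'z::real_normed_vector)
    \<Rightarrow> ('z \<Rightarrow>\<^sub>L real) \<Rightarrow> 'x \<Rightarrow> ('y \<Rightarrow>\<^sub>L real)" where
  "adj1 m z' x = Blinfun (\<lambda>y. blinfun_apply z' (m x y))"

definition adj2 :: "('x::real_normed_vector \<Rightarrow> 'y::real_normed_vector \<Rightarrow> 'z::real_normed_vector)
    \<Rightarrow> (('y \<Rightarrow>\<^sub>L real) \<Rightarrow>\<^sub>L real) \<Rightarrow> ('z \<Rightarrow>\<^sub>L real) \<Rightarrow> ('x \<Rightarrow>\<^sub>L real)" where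
  "adj2 m y'' z' = Blinfun (\<lambda>x. blinfun_apply y'' (adj1 m z' x))"

definition adj3 :: "('x::real_normed_vector \<Rightarrow> 'y::real_normed_vector \<Rightarrow> 'z::real_normed_vector)
    \<Rightarrow> (('x \<Rightarrow>\<^sub>L real) \<Rightarrow>\<^sub>L real) \<Rightarrow> (('y \<Rightarrow>\<^sub>L real) \<Rightarrow>\<^sub>L real)
    \<Rightarrow> (('z \<Rightarrow>\<^sub>L real) \<Rightarrow>\<^sub>L real)" where
  "adj3 m x'' y'' = Blinfun (\<lambda>z'. blinfun_apply x'' (adj2 m y'' z'))"

definition transp_map :: "('x \<Rightarrow> 'y \<Rightarrow> 'z) \<Rightarrow> 'y \<Rightarrow> 'x \<Rightarrow> 'z" where
  "transp_map m y x = m x y"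

definition adj3_tt :: "('x::real_normed_vector \<Rightarrow> 'y::real_normed_vector \<Rightarrow> 'z::real_normed_vector)
    \<Rightarrow> (('x \<Rightarrow>\<^sub>L real) \<Rightarrow>\<^sub>L real) \<Rightarrow> (('y \<Rightarrow>\<^sub>L real) \<Rightarrow>\<^sub>L real)
    \<Rightarrow> (('z \<Rightarrow>\<^sub>L real) \<Rightarrow>\<^sub>L real)" where
  "adj3_tt m x'' y'' = adj3 (transp_map m) y'' x''"

definition wap_l :: "('a::real_normed_vector \<Rightarrow> 'b::real_normed_vector \<Rightarrow> 'b) \<Rightarrow> ('b \<Rightarrow>\<^sub>L real) set" where
  "wap_l p = {b'. \<forall>a'' b''. blinfun_apply (adj3 p a'' b'') b' = blinfun_apply (adj3_tt p a'' b'') b'}"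

definition directed_preorder :: "('i \<Rightarrow> 'i \<Rightarrow> bool) \<Rightarrow> bool" where
  "directed_preorder le \<longleftrightarrow> (\<forall>i. le i i) \<and> (\<forall>i j k. le i j \<longrightarrow> le j k \<longrightarrow> le i k)
     \<and> (\<forall>i j. \<exists>k. le i k \<and> le j k)"

definition net_tendsto :: "('i \<Rightarrow> 'i \<Rightarrow> bool) \<Rightarrow> ('i \<Rightarrow> 'x::metric_space) \<Rightarrow> 'x \<Rightarrow> bool" where
  "net_tendsto le x l \<longleftrightarrow> (\<forall>\<epsilon>>0. \<exists>i0. \<forall>i. le i0 i \<longrightarrow> dist (x i) l < \<epsilon>)"

definition banach_left_module :: "('a::real_normed_algebra \<Rightarrow> 'b::real_normed_vector \<Rightarrow> 'b) \<Rightarrow> bool" where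
  "banach_left_module p \<longleftrightarrow> bounded_bilinear p
     \<and> (\<forall>a1 a2 b. p (a1 * a2) b = p a1 (p a2 b))
     \<and> (\<forall>a b. norm (p a b) \<le> norm a * norm b)"

definition bounded_left_approx_identity ::
  "('a::real_normed_algebra \<Rightarrow> 'b::real_normed_vector \<Rightarrow> 'b) \<Rightarrow> ('i \<Rightarrow> 'i \<Rightarrow> bool) \<Rightarrow> ('i \<Rightarrow> 'a) \<Rightarrow> bool" where
  "bounded_left_approx_identity p le e \<longleftrightarrow>
     (\<exists>M. \<forall>i. norm (e i) \<le> M)
     \<and> (\<forall>a. net_tendsto le (\<lambda>i. e i * a) a)
     \<and> (\<forall>b. net_tendsto le (\<lambda>i. p (e i) b) b)"

end

theory Submission
  imports Defs
begin

(* If the net fails to converge for some b'', there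
   is an eps > 0 and a cofinal set of "bad" indices i with |b''(pi^*(b', e_i)) - b''(b')| >= eps.
   Since (e_i) is bounded, a Tychonoff (Banach-Alaoglu) argument yields a weak* cluster
   point X in A^** of (e_i) along the bad indices.  Because e_i b -> b in norm, X acts as a
   left unit: (pi^t)^**(X, b') = b'.  The wap condition then gives
   X(pi^**(b'', b')) = pi^{t***t}(X, b'')(b') = b''(b'), and since X is a cluster point along
   the bad indices, some bad index has b''(pi^*(b', e_i)) = pi^**(b'', b')(e_i) within eps of
   b''(b') -- a contradiction. *)

lemma adj1_apply:
  assumes "bounded_bilinear m"
  shows "blinfun_apply (adj1 m z' x) y = blinfun_apply z' (m x y)"
proof -
  have "bounded_linear (\<lambda>y. blinfun_apply z' (m x y))"
    by (rule bounded_linear_compose[OF blinfun.bounded_linear_right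
          bounded_bilinear.bounded_linear_right[OF assms]])
  then show ?thesis unfolding adj1_def by (simp add: bounded_linear_Blinfun_apply)
qed

lemma adj1_bounded_bilinear:
  assumes m: "bounded_bilinear m"
  shows "bounded_bilinear (adj1 m)"
proof
  obtain K where K: "\<And>x y. norm (m x y) \<le> norm x * norm y * K" "K \<ge> 0"
    using bounded_bilinear.nonneg_bounded[OF m] by blast
  show "\<exists>K. \<forall>z' x. norm (adj1 m z' x) \<le> norm z' * norm x * K"
  proof (intro exI allI)
    fix z' x
    show "norm (adj1 m z' x) \<le> norm z' * norm x * K"
    proof (rule norm_blinfun_bound)
      show "0 \<le> norm z' * norm x * K" using K(2) by simp
      fix y
      have "norm (blinfun_apply (adj1 m z' x) y) \<le> norm z' * norm (m x y)"
        unfolding adj1_apply[OF m] by (rule norm_blinfun)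
      also have "\<dots> \<le> norm z' * (norm x * norm y * K)"
        by (rule mult_left_mono[OF K(1)]) simp
      finally show "norm (blinfun_apply (adj1 m z' x) y) \<le> norm z' * norm x * K * norm y"
        by (simp add: mult_ac)
    qed
  qed
qed (auto intro!: blinfun_eqI simp: adj1_apply[OF m] blinfun.bilinear_simps
       bounded_bilinear.add_left[OF m] bounded_bilinear.add_right[OF m]
       bounded_bilinear.scaleR_left[OF m] bounded_bilinear.scaleR_right[OF m])

lemma adj2_eq_adj1_adj1: "adj2 m = adj1 (adj1 m)"
  by (intro ext) (simp add: adj1_def adj2_def)

lemma adj3_eq_adj1_adj2: "adj3 m = adj1 (adj2 m)"
  by (intro ext) (simp add: adj1_def adj3_def)

lemma adj2_bounded_bilinear: "bounded_bilinear m \<Longrightarrow> bounded_bilinear (adj2 m)"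
  by (simp add: adj2_eq_adj1_adj1 adj1_bounded_bilinear)

lemma adj2_apply:
  "bounded_bilinear m \<Longrightarrow> blinfun_apply (adj2 m y'' z') x = blinfun_apply y'' (adj1 m z' x)"
  by (simp add: adj2_eq_adj1_adj1 adj1_apply adj1_bounded_bilinear)

lemma adj3_apply:
  "bounded_bilinear m \<Longrightarrow> blinfun_apply (adj3 m x'' y'') z' = blinfun_apply x'' (adj2 m y'' z')"
  by (simp add: adj3_eq_adj1_adj2 adj1_apply adj2_bounded_bilinear)

lemma directed_finite_upper_bound:
  assumes dir: "directed_preorder le" and "finite I"
  shows "\<exists>k. \<forall>i\<in>I. le i k"
  using \<open>finite I\<close>
proof (induction I rule: finite_induct)
  case (insert j I)
  then obtain k where "\<forall>i\<in>I. le i k" by blast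
  moreover obtain k' where "le j k'" "le k k'"
    using dir unfolding directed_preorder_def by blast
  ultimately show ?case using dir unfolding directed_preorder_def by blast
qed simp

lemma net_tendsto_bounded_linear:
  assumes f: "bounded_linear f" and x: "net_tendsto le x l"
  shows "net_tendsto le (\<lambda>i. f (x i)) (f l)"
  unfolding net_tendsto_def
proof (intro allI impI)
  fix \<epsilon> :: real assume "\<epsilon> > 0"
  obtain K where K: "K > 0" "\<And>y. norm (f y) \<le> norm y * K"
    using bounded_linear.pos_bounded[OF f] by blast
  obtain i0 where i0: "\<And>i. le i0 i \<Longrightarrow> dist (x i) l < \<epsilon> / K"
    using x \<open>\<epsilon> > 0\<close> K(1) unfolding net_tendsto_def by (meson divide_pos_pos)
  have "dist (f (x i)) (f l) < \<epsilon>" if "le i0 i" for i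
  proof -
    have "dist (f (x i)) (f l) \<le> dist (x i) l * K"
      using K(2)[of "x i - l"] by (simp add: dist_norm linear_diff[OF bounded_linear.linear[OF f]])
    also have "\<dots> < \<epsilon>" using i0[OF that] K(1) by (simp add: pos_less_divide_eq)
    finally show ?thesis .
  qed
  then show "\<exists>i0. \<forall>i. le i0 i \<longrightarrow> dist (f (x i)) (f l) < \<epsilon>" by blast
qed

(* The closures
   of the tails have the finite intersection property by directedness. *)
lemma compact_space_net_cluster_point:
  assumes T: "compact_space T" and dir: "directed_preorder le"
    and cofinal: "\<forall>i0. \<exists>i. le i0 i \<and> P i" and x: "\<forall>i. x i \<in> topspace T"
  obtains c where "c \<in> topspace T"
    "\<And>i0 U. openin T U \<Longrightarrow> c \<in> U \<Longrightarrow> \<exists>i. le i0 i \<and> P i \<and> x i \<in> U"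
proof -
  define tail where "tail i0 = T closure_of (x ` {i. le i0 i \<and> P i})" for i0
  have "\<Inter>\<F> \<noteq> {}" if fin: "finite \<F>" "\<F> \<subseteq> range tail" for \<F>
  proof -
    obtain I where I: "finite I" "\<F> = tail ` I"
      using fin by (meson finite_subset_image)
    obtain k where k: "\<forall>i\<in>I. le i k"
      using directed_finite_upper_bound[OF dir I(1)] by blast
    obtain j where j: "le k j" "P j" using cofinal by blast
    have "x j \<in> tail i0" if "i0 \<in> I" for i0
    proof -
      have "le i0 j" using k that j dir unfolding directed_preorder_def by blast
      then show ?thesis
        using j x closure_of_subset[of "x ` {i. le i0 i \<and> P i}" T]
        unfolding tail_def by blast
    qed
    then show ?thesis using I by blast
  qed
  then have "\<Inter>(range tail) \<noteq> {}"
    using compact_space_fip[THEN iffD1, OF T] by (auto simp: tail_def)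
  then obtain c where c: "\<And>i0. c \<in> tail i0" by blast
  show thesis
  proof
    show "c \<in> topspace T"
      using c[of undefined] unfolding tail_def by (meson closure_of_subset_topspace subsetD)
    fix i0 U assume "openin T U" "c \<in> U"
    then show "\<exists>i. le i0 i \<and> P i \<and> x i \<in> U"
      using c[of i0] unfolding tail_def in_closure_of by blast
  qed
qed

lemma zero_if_arbitrarily_small:
  fixes x :: real
  assumes "\<And>d. d > 0 \<Longrightarrow> \<bar>x\<bar> < d"
  shows "x = 0"
  using assms[of "\<bar>x\<bar>"] by fastforce

definition weak_cluster_point ::
  "('i \<Rightarrow> 'i \<Rightarrow> bool) \<Rightarrow> ('i \<Rightarrow> bool) \<Rightarrow> ('i \<Rightarrow> 'a::real_normed_vector)
     \<Rightarrow> (('a \<Rightarrow>\<^sub>L real) \<Rightarrow> real) \<Rightarrow> bool" where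
  "weak_cluster_point le P e E \<longleftrightarrow>
     (\<forall>i0 F \<delta>. finite F \<and> \<delta> > 0 \<longrightarrow>
        (\<exists>i. le i0 i \<and> P i \<and> (\<forall>\<phi>\<in>F. \<bar>blinfun_apply \<phi> (e i) - E \<phi>\<bar> < \<delta>)))"

lemma weak_cluster_pointD:
  assumes "weak_cluster_point le P e E" "finite F" "\<delta> > 0"
  shows "\<exists>i. le i0 i \<and> P i \<and> (\<forall>\<phi>\<in>F. \<bar>blinfun_apply \<phi> (e i) - E \<phi>\<bar> < \<delta>)"
  using assms unfolding weak_cluster_point_def by blast

lemma weak_cluster_point_add:
  assumes E: "weak_cluster_point le P e E"
  shows "E (\<phi> + \<psi>) = E \<phi> + E \<psi>"
proof -
  have "E (\<phi> + \<psi>) - (E \<phi> + E \<psi>) = 0"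
  proof (rule zero_if_arbitrarily_small)
    fix d :: real assume "d > 0"
    then obtain i where "\<forall>\<theta>\<in>{\<phi>, \<psi>, \<phi> + \<psi>}. \<bar>blinfun_apply \<theta> (e i) - E \<theta>\<bar> < d / 3"
      using weak_cluster_pointD[OF E, of "{\<phi>, \<psi>, \<phi> + \<psi>}" "d / 3"] by auto
    then have "\<bar>blinfun_apply \<phi> (e i) - E \<phi>\<bar> < d / 3" "\<bar>blinfun_apply \<psi> (e i) - E \<psi>\<bar> < d / 3"
      "\<bar>blinfun_apply \<phi> (e i) + blinfun_apply \<psi> (e i) - E (\<phi> + \<psi>)\<bar> < d / 3"
      by (auto simp: blinfun.add_left)
    then show "\<bar>E (\<phi> + \<psi>) - (E \<phi> + E \<psi>)\<bar> < d"
      by linarith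
  qed
  then show ?thesis by simp
qed

lemma weak_cluster_point_scaleR:
  assumes E: "weak_cluster_point le P e E"
  shows "E (r *\<^sub>R \<phi>) = r * E \<phi>"
proof -
  have "E (r *\<^sub>R \<phi>) - r * E \<phi> = 0"
  proof (rule zero_if_arbitrarily_small)
    fix d :: real assume "d > 0"
    have nonzero: "1 + \<bar>r\<bar> \<noteq> 0" by (simp add: add_pos_nonneg)
    define \<delta> where "\<delta> = d / (1 + \<bar>r\<bar>)"
    have "\<delta> > 0" using \<open>d > 0\<close> by (simp add: \<delta>_def add_pos_nonneg)
    then obtain i where "\<forall>\<theta>\<in>{\<phi>, r *\<^sub>R \<phi>}. \<bar>blinfun_apply \<theta> (e i) - E \<theta>\<bar> < \<delta>"
      using weak_cluster_pointD[OF E, of "{\<phi>, r *\<^sub>R \<phi>}" \<delta>] by auto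
    then have i: "\<bar>r * blinfun_apply \<phi> (e i) - E (r *\<^sub>R \<phi>)\<bar> < \<delta>"
        "\<bar>blinfun_apply \<phi> (e i) - E \<phi>\<bar> < \<delta>"
      by (auto simp: blinfun.scaleR_left)
    have "\<bar>r * blinfun_apply \<phi> (e i) - r * E \<phi>\<bar> \<le> \<bar>r\<bar> * \<delta>"
      using i(2) by (simp add: right_diff_distrib[symmetric] abs_mult mult_left_mono)
    moreover have "\<delta> + \<bar>r\<bar> * \<delta> = d"
    proof -
      have "\<delta> + \<bar>r\<bar> * \<delta> = (1 + \<bar>r\<bar>) * \<delta>" by (simp add: algebra_simps)
      also have "\<dots> = d" unfolding \<delta>_def using nonzero by simp
      finally show ?thesis .
    qed
    ultimately show "\<bar>E (r *\<^sub>R \<phi>) - r * E \<phi>\<bar> < d"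
      using i(1) by linarith
  qed
  then show ?thesis by simp
qed

lemma weak_cluster_point_norm_bound:
  assumes E: "weak_cluster_point le P e E" and bd: "\<forall>i. norm (e i) \<le> M"
  shows "norm (E \<phi>) \<le> norm \<phi> * M"
proof (rule field_le_epsilon)
  fix d :: real assume "d > 0"
  then obtain i where i: "\<bar>blinfun_apply \<phi> (e i) - E \<phi>\<bar> < d"
    using weak_cluster_pointD[OF E, of "{\<phi>}" d] by auto
  have "\<bar>blinfun_apply \<phi> (e i)\<bar> \<le> norm \<phi> * M"
    using norm_blinfun[of \<phi> "e i"] mult_left_mono[OF bd[rule_format, of i], of "norm \<phi>"]
    by simp
  then show "norm (E \<phi>) \<le> norm \<phi> * M + d" using i by simp
qed

lemma weak_cluster_point_bounded_linear:
  assumes "weak_cluster_point le P e E" and "\<forall>i. norm (e i) \<le> M"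
  shows "bounded_linear E"
  using weak_cluster_point_add[OF assms(1)] weak_cluster_point_scaleR[OF assms(1)]
    weak_cluster_point_norm_bound[OF assms]
  by (intro bounded_linear_intro[where K = M]) auto

lemma weak_cluster_point_limit:
  assumes E: "weak_cluster_point le P e E"
    and lim: "net_tendsto le (\<lambda>i. blinfun_apply \<phi> (e i)) l"
  shows "E \<phi> = l"
proof -
  have "E \<phi> - l = 0"
  proof (rule zero_if_arbitrarily_small)
    fix d :: real assume "d > 0"
    then obtain i0 where i0: "\<And>i. le i0 i \<Longrightarrow> dist (blinfun_apply \<phi> (e i)) l < d / 2"
      using lim unfolding net_tendsto_def by (meson half_gt_zero)
    obtain i where i: "le i0 i" "\<bar>blinfun_apply \<phi> (e i) - E \<phi>\<bar> < d / 2"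
      using weak_cluster_pointD[OF E, of "{\<phi>}" "d / 2" i0] \<open>d > 0\<close> by auto
    have "\<bar>blinfun_apply \<phi> (e i) - l\<bar> < d / 2"
      using i0[OF i(1)] by (simp add: dist_real_def)
    then show "\<bar>E \<phi> - l\<bar> < d"
      using i(2) by linarith
  qed
  then show ?thesis by simp
qed

(* The evaluations phi |-> phi(e_i) lie in the
   compact product of the intervals [-M |phi|, M |phi|]. *)
lemma weak_cluster_point_exists:
  fixes e :: "'i \<Rightarrow> 'a::real_normed_vector"
  assumes dir: "directed_preorder le" and bd: "\<forall>i. norm (e i) \<le> M"
    and cofinal: "\<forall>i0. \<exists>i. le i0 i \<and> P i"
  obtains X :: "('a \<Rightarrow>\<^sub>L real) \<Rightarrow>\<^sub>L real" where "weak_cluster_point le P e (blinfun_apply X)"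
proof -
  define T where "T = product_topology
      (\<lambda>\<phi>::'a \<Rightarrow>\<^sub>L real. subtopology euclideanreal {-(M * norm \<phi>)..M * norm \<phi>}) UNIV"
  define ev where "ev i = (\<lambda>\<phi>::'a \<Rightarrow>\<^sub>L real. blinfun_apply \<phi> (e i))" for i
  have compact: "compact_space T"
    unfolding T_def compact_space_product_topology by (auto intro: compact_space_subtopology)
  have "\<bar>blinfun_apply \<phi> (e i)\<bar> \<le> M * norm \<phi>" for \<phi> i
    using norm_blinfun[of \<phi> "e i"] mult_left_mono[OF bd[rule_format, of i], of "norm \<phi>"]
    by (simp add: mult.commute)
  then have ev: "\<forall>i. ev i \<in> topspace T"
    by (simp add: T_def ev_def PiE_UNIV_domain abs_le_iff minus_le_iff)
  obtain E where E: "E \<in> topspace T"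
    and near: "\<And>i0 U. openin T U \<Longrightarrow> E \<in> U \<Longrightarrow> \<exists>i. le i0 i \<and> P i \<and> ev i \<in> U"
    using compact_space_net_cluster_point[OF compact dir cofinal ev] by blast
  have proj: "continuous_map T euclideanreal (\<lambda>f. f \<phi>)" for \<phi>
    using continuous_map_product_projection[of \<phi> UNIV
        "\<lambda>\<phi>. subtopology euclideanreal {-(M * norm \<phi>)..M * norm \<phi>}"]
    unfolding T_def continuous_map_in_subtopology by simp
  have cluster: "weak_cluster_point le P e E"
    unfolding weak_cluster_point_def
  proof (intro allI impI)
    fix i0 and F :: "('a \<Rightarrow>\<^sub>L real) set" and \<delta> :: real
    assume F: "finite F \<and> \<delta> > 0"
    define U where "U = topspace T \<inter> \<Inter>((\<lambda>\<phi>. {f \<in> topspace T. f \<phi> \<in> ball (E \<phi>) \<delta>}) ` F)"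
    have "openin T {f \<in> topspace T. f \<phi> \<in> ball (E \<phi>) \<delta>}" for \<phi>
      by (rule openin_continuous_map_preimage[OF proj]) simp
    then have "openin T U"
      unfolding U_def using F by (intro openin_Int_Inter) auto
    moreover have "E \<in> U" using E F by (simp add: U_def)
    ultimately obtain i where "le i0 i" "P i" "ev i \<in> U" using near by blast
    then show "\<exists>i. le i0 i \<and> P i \<and> (\<forall>\<phi>\<in>F. \<bar>blinfun_apply \<phi> (e i) - E \<phi>\<bar> < \<delta>)"
      by (auto simp: U_def ev_def dist_real_def abs_minus_commute)
  qed
  have "blinfun_apply (Blinfun E) = E"
    using weak_cluster_point_bounded_linear[OF cluster bd]
    by (simp add: bounded_linear_Blinfun_apply)
  then show thesis using that cluster by metis
qed

(* If e_i b -> b for all b, every weak* cluster point X of (e_i) acts as a left unit on B^*: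
   (pi^t)^**(X, b') = b', since (pi^t)^*(b', b)(e_i) = b'(e_i b) -> b'(b). *)
lemma weak_cluster_point_left_unit:
  fixes p :: "'a::real_normed_vector \<Rightarrow> 'b::real_normed_vector \<Rightarrow> 'b"
  assumes p: "bounded_bilinear p" and conv: "\<forall>b. net_tendsto le (\<lambda>i. p (e i) b) b"
    and X: "weak_cluster_point le P e (blinfun_apply X)"
  shows "adj2 (transp_map p) X b' = b'"
proof (rule blinfun_eqI)
  fix b
  have q: "bounded_bilinear (transp_map p)"
    unfolding transp_map_def using bounded_bilinear.flip[OF p] .
  have "net_tendsto le (\<lambda>i. blinfun_apply (adj1 (transp_map p) b' b) (e i)) (blinfun_apply b' b)"
    using net_tendsto_bounded_linear[OF blinfun.bounded_linear_right conv[rule_format, of b]]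
    by (simp add: adj1_apply[OF q] transp_map_def)
  then show "blinfun_apply (adj2 (transp_map p) X b') b = blinfun_apply b' b"
    by (simp add: adj2_apply[OF q] weak_cluster_point_limit[OF X])
qed

lemma wap_left_unit_eval:
  fixes p :: "'a::real_normed_vector \<Rightarrow> 'b::real_normed_vector \<Rightarrow> 'b"
  assumes p: "bounded_bilinear p" and wap: "b' \<in> wap_l p"
    and unit: "adj2 (transp_map p) X b' = b'"
  shows "blinfun_apply X (adj2 p b'' b') = blinfun_apply b'' b'"
proof -
  have q: "bounded_bilinear (transp_map p)"
    unfolding transp_map_def using bounded_bilinear.flip[OF p] .
  have "blinfun_apply X (adj2 p b'' b') = blinfun_apply (adj3 p X b'') b'"
    by (simp add: adj3_apply[OF p])
  also have "\<dots> = blinfun_apply (adj3_tt p X b'') b'"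
    using wap unfolding wap_l_def by blast
  also have "\<dots> = blinfun_apply b'' (adj2 (transp_map p) X b')"
    by (simp add: adj3_tt_def adj3_apply[OF q])
  finally show ?thesis using unit by simp
qed

theorem mainTheorem11:
  fixes p :: "'a::{real_normed_algebra, banach} \<Rightarrow> 'b::banach \<Rightarrow> 'b"
    and le :: "'i \<Rightarrow> 'i \<Rightarrow> bool"
    and e :: "'i \<Rightarrow> 'a"
    and b' :: "'b \<Rightarrow>\<^sub>L real"
  assumes "banach_left_module p"
    and "directed_preorder le"
    and "bounded_left_approx_identity p le e"
    and "b' \<in> wap_l p"
  shows "\<forall>b'' :: ('b \<Rightarrow>\<^sub>L real) \<Rightarrow>\<^sub>L real.
           net_tendsto le (\<lambda>i. blinfun_apply b'' (adj1 p b' (e i))) (blinfun_apply b'' b')"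
proof (intro allI, rule ccontr)
  fix b'' :: "('b \<Rightarrow>\<^sub>L real) \<Rightarrow>\<^sub>L real"
  have p: "bounded_bilinear p" using assms(1) unfolding banach_left_module_def by blast
  obtain M where bd: "\<forall>i. norm (e i) \<le> M" and conv: "\<forall>b. net_tendsto le (\<lambda>i. p (e i) b) b"
    using assms(3) unfolding bounded_left_approx_identity_def by blast
  define g where "g = adj2 p b'' b'"
  have g: "blinfun_apply g a = blinfun_apply b'' (adj1 p b' a)" for a
    by (simp add: g_def adj2_apply[OF p])
  assume "\<not> net_tendsto le (\<lambda>i. blinfun_apply b'' (adj1 p b' (e i))) (blinfun_apply b'' b')"
  then obtain \<epsilon> :: real where "\<epsilon> > 0"
    and bad: "\<forall>i0. \<exists>i. le i0 i \<and> \<not> \<bar>blinfun_apply g (e i) - blinfun_apply b'' b'\<bar> < \<epsilon>"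
    unfolding net_tendsto_def g dist_real_def by blast
  obtain X where X: "weak_cluster_point le (\<lambda>i. \<not> \<bar>blinfun_apply g (e i) - blinfun_apply b'' b'\<bar> < \<epsilon>)
      e (blinfun_apply X)"
    using weak_cluster_point_exists[OF assms(2) bd bad] by blast
  have "blinfun_apply X g = blinfun_apply b'' b'"
    unfolding g_def
    by (rule wap_left_unit_eval[OF p assms(4) weak_cluster_point_left_unit[OF p conv X]])
  then show False
    using weak_cluster_pointD[OF X, of "{g}" \<epsilon> undefined] \<open>\<epsilon> > 0\<close> by auto
qed

end
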